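(* For an idempotent semiring $S$ the following are equivalent: (1) $S$ satisfies both $xyz\approx xzy$ and $x\approx xyx+x+xyx$; (2) $S$ satisfies $xz\approx xzy+xz+xzy$; (3) $\mathcal{L}^{\bullet}$ is the least distributive lattice congruence on $S$ (equivalently, $S$ satisfies $x\approx xy+x+xy$). In particular, for such $S$ the multiplicative reduct $(S,\cdot)$ is a left normal band.
   Context: An idempotent semiring is an algebra $(S,+,\cdot)$ with $(S,+)$, $(S,\cdot)$ bands and both distributive laws; addition not assumed commutative. $a\,\mathcal{L}^{\bullet}\,b$ iff $ab=a$ and $ba=b$. A distributive lattice congruence is a congruence $\rho$ with $S/\rho$ satisfying $x+y\approx y+x$, $xy\approx yx$, $x+xy\approx x$. A left normal band is a band satisfying $xyz\approx xzy$. *)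

theory Defs
  imports Main
begin

definition idem_semiring :: "('a \<Rightarrow> 'a \<Rightarrow> 'a) \<Rightarrow> ('a \<Rightarrow> 'a \<Rightarrow> 'a) \<Rightarrow> bool" where
  "idem_semiring add mul \<longleftrightarrow>
     (\<forall>x y z. add (add x y) z = add x (add y z)) \<and> (\<forall>x. add x x = x) \<and>
     (\<forall>x y z. mul (mul x y) z = mul x (mul y z)) \<and> (\<forall>x. mul x x = x) \<and>
     (\<forall>x y z. mul x (add y z) = add (mul x y) (mul x z)) \<and>
     (\<forall>x y z. mul (add x y) z = add (mul x z) (mul y z))"

definition Lbullet :: "('a \<Rightarrow> 'a \<Rightarrow> 'a) \<Rightarrow> 'a \<Rightarrow> 'a \<Rightarrow> bool" where
  "Lbullet mul a b \<longleftrightarrow> mul a b = a \<and> mul b a = b"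

definition is_congruence :: "('a \<Rightarrow> 'a \<Rightarrow> 'a) \<Rightarrow> ('a \<Rightarrow> 'a \<Rightarrow> 'a) \<Rightarrow> ('a \<Rightarrow> 'a \<Rightarrow> bool) \<Rightarrow> bool" where
  "is_congruence add mul \<rho> \<longleftrightarrow> equivp \<rho> \<and>
     (\<forall>a b c. \<rho> a b \<longrightarrow> \<rho> (add a c) (add b c) \<and> \<rho> (add c a) (add c b)
                         \<and> \<rho> (mul a c) (mul b c) \<and> \<rho> (mul c a) (mul c b))"

definition dl_congruence :: "('a \<Rightarrow> 'a \<Rightarrow> 'a) \<Rightarrow> ('a \<Rightarrow> 'a \<Rightarrow> 'a) \<Rightarrow> ('a \<Rightarrow> 'a \<Rightarrow> bool) \<Rightarrow> bool" where
  "dl_congruence add mul \<rho> \<longleftrightarrow> is_congruence add mul \<rho> \<and>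
     (\<forall>x y. \<rho> (add x y) (add y x)) \<and>
     (\<forall>x y. \<rho> (mul x y) (mul y x)) \<and>
     (\<forall>x y. \<rho> (add x (mul x y)) x)"

definition least_dl_congruence :: "('a \<Rightarrow> 'a \<Rightarrow> 'a) \<Rightarrow> ('a \<Rightarrow> 'a \<Rightarrow> 'a) \<Rightarrow> ('a \<Rightarrow> 'a \<Rightarrow> bool) \<Rightarrow> bool" where
  "least_dl_congruence add mul \<rho> \<longleftrightarrow> dl_congruence add mul \<rho> \<and>
     (\<forall>\<sigma>. dl_congruence add mul \<sigma> \<longrightarrow> (\<forall>a b. \<rho> a b \<longrightarrow> \<sigma> a b))"

definition left_normal_band :: "('a \<Rightarrow> 'a \<Rightarrow> 'a) \<Rightarrow> bool" where
  "left_normal_band mul \<longleftrightarrow>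
     (\<forall>x y z. mul (mul x y) z = mul x (mul y z)) \<and> (\<forall>x. mul x x = x) \<and>
     (\<forall>x y z. mul (mul x y) z = mul (mul x z) y)"

end

theory Submission
  imports Defs
begin

text \<open>All conditions are equivalent to the absorption law \<open>x = xy + x + xy\<close>. It forces
  \<open>x + xy = x = xy + x\<close>, hence left regularity \<open>xyx = xy\<close> and left normality
  \<open>xyz = xzy\<close> of the multiplicative band, and with these \<open>\<L>\<^sup>\<bullet>\<close> is a distributive
  lattice congruence. It is the least one because \<open>a \<L>\<^sup>\<bullet> b\<close> means \<open>a = ab\<close> and
  \<open>b = ba\<close>, which any congruence with commutative multiplication identifies. Conversely,
  if \<open>\<L>\<^sup>\<bullet>\<close> is such a congruence then \<open>x + xy\<close> and \<open>xy + x\<close> are \<open>\<L>\<^sup>\<bullet>\<close>-related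
  to \<open>x\<close>, which already makes them equal to \<open>x\<close>.\<close>

locale idempotent_semiring =
  fixes add (infixl "\<oplus>" 65) and mul (infixl "\<cdot>" 70)
  assumes add_assoc: "(x \<oplus> y) \<oplus> z = x \<oplus> (y \<oplus> z)"
    and add_idem: "x \<oplus> x = x"
    and mul_assoc: "(x \<cdot> y) \<cdot> z = x \<cdot> (y \<cdot> z)"
    and mul_idem: "x \<cdot> x = x"
    and distrib_left: "x \<cdot> (y \<oplus> z) = x \<cdot> y \<oplus> x \<cdot> z"
    and distrib_right: "(x \<oplus> y) \<cdot> z = x \<cdot> z \<oplus> y \<cdot> z"

lemma idem_semiring_iff_idempotent_semiring:
  "idem_semiring add mul \<longleftrightarrow> idempotent_semiring add mul"
  unfolding idem_semiring_def idempotent_semiring_def by blast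

context idempotent_semiring
begin

lemma equivp_Lbullet: "equivp (Lbullet mul)"
proof (rule equivpI)
  show "reflp (Lbullet mul)" by (rule reflpI) (simp add: Lbullet_def mul_idem)
  show "symp (Lbullet mul)" by (rule sympI) (simp add: Lbullet_def)
  show "transp (Lbullet mul)"
    by (rule transpI) (metis Lbullet_def mul_assoc)
qed

lemma Lbullet_le_dl_congruence:
  assumes "dl_congruence add mul \<sigma>" and "Lbullet mul a b"
  shows "\<sigma> a b"
proof -
  have "\<sigma> (a \<cdot> b) (b \<cdot> a)" using assms(1) unfolding dl_congruence_def by blast
  with assms(2) show ?thesis unfolding Lbullet_def by simp
qed

lemma absorption_if_dl_congruence_Lbullet:
  assumes "dl_congruence add mul (Lbullet mul)"
  shows "x = x \<cdot> y \<oplus> x \<oplus> x \<cdot> y"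
proof -
  have equiv: "equivp (Lbullet mul)"
    and comm: "Lbullet mul (x \<cdot> y \<oplus> x) (x \<oplus> x \<cdot> y)"
    and absorb_right: "Lbullet mul (x \<oplus> x \<cdot> y) x"
    using assms unfolding dl_congruence_def is_congruence_def by blast+
  have absorb_left: "Lbullet mul (x \<cdot> y \<oplus> x) x"
    using equivp_transp[OF equiv comm absorb_right] .
  have "x \<cdot> (x \<oplus> x \<cdot> y) = x \<oplus> x \<cdot> y" and "x \<cdot> (x \<cdot> y \<oplus> x) = x \<cdot> y \<oplus> x"
    by (simp_all add: distrib_left mul_idem mul_assoc[symmetric])
  with absorb_right absorb_left have "x \<oplus> x \<cdot> y = x" and "x \<cdot> y \<oplus> x = x"
    unfolding Lbullet_def by simp_all
  then show ?thesis by simp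
qed

end

locale absorptive_idempotent_semiring = idempotent_semiring +
  assumes absorption: "x = x \<cdot> y \<oplus> x \<oplus> x \<cdot> y"
begin

lemma add_mul_absorb_right: "x \<oplus> x \<cdot> y = x"
  by (metis absorption add_assoc add_idem)

lemma add_mul_absorb_left: "x \<cdot> y \<oplus> x = x"
  by (metis absorption add_assoc add_idem)

lemma mul_left_regular: "x \<cdot> y \<cdot> x = x \<cdot> y"
  by (metis add_mul_absorb_left add_mul_absorb_right mul_assoc mul_idem)

lemma mul_left_normal: "x \<cdot> y \<cdot> z = x \<cdot> z \<cdot> y"
  by (metis mul_left_regular mul_assoc add_mul_absorb_left absorption distrib_right)

lemma is_congruence_Lbullet: "is_congruence add mul (Lbullet mul)"
  unfolding is_congruence_def
proof (intro conjI equivp_Lbullet allI impI)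
  fix a b c
  assume "Lbullet mul a b"
  then have ab: "a \<cdot> b = a" and ba: "b \<cdot> a = b" unfolding Lbullet_def by auto
  show "Lbullet mul (a \<oplus> c) (b \<oplus> c)" unfolding Lbullet_def
    by (metis add_mul_absorb_left ab ba distrib_left distrib_right mul_idem)
  have add_left: "(c \<oplus> u) \<cdot> (c \<oplus> v) = c \<oplus> u" if "u \<cdot> v = u" for u v
  proof -
    have "(c \<oplus> u) \<cdot> (c \<oplus> v) = (c \<oplus> c \<cdot> v) \<oplus> (u \<cdot> c \<oplus> u \<cdot> v)"
      by (subst distrib_right) (simp only: distrib_left mul_idem)
    also have "\<dots> = c \<oplus> (u \<cdot> c \<oplus> u)" by (simp add: add_mul_absorb_right that add_assoc)
    finally show ?thesis by (simp add: add_mul_absorb_left)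
  qed
  show "Lbullet mul (c \<oplus> a) (c \<oplus> b)"
    unfolding Lbullet_def using add_left ab ba by blast
  show "Lbullet mul (a \<cdot> c) (b \<cdot> c)" unfolding Lbullet_def
    by (metis ab ba mul_left_regular mul_assoc)
  show "Lbullet mul (c \<cdot> a) (c \<cdot> b)" unfolding Lbullet_def
    by (metis ab ba mul_left_regular mul_assoc)
qed

lemma dl_congruence_Lbullet: "dl_congruence add mul (Lbullet mul)"
  unfolding dl_congruence_def
proof (intro conjI is_congruence_Lbullet allI)
  fix x y
  show "Lbullet mul (x \<oplus> y) (y \<oplus> x)" unfolding Lbullet_def
    by (metis add_mul_absorb_right add_mul_absorb_left distrib_left distrib_right mul_idem)
  show "Lbullet mul (x \<cdot> y) (y \<cdot> x)" unfolding Lbullet_def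
    by (metis mul_left_normal mul_assoc mul_idem)
  show "Lbullet mul (x \<oplus> x \<cdot> y) x" unfolding Lbullet_def
    by (simp add: add_mul_absorb_right mul_idem)
qed

lemma least_dl_congruence_Lbullet: "least_dl_congruence add mul (Lbullet mul)"
  unfolding least_dl_congruence_def
  using dl_congruence_Lbullet Lbullet_le_dl_congruence by blast

end

context idempotent_semiring
begin

lemma least_dl_congruence_Lbullet_iff_absorption:
  "least_dl_congruence add mul (Lbullet mul) \<longleftrightarrow> (\<forall>x y. x = x \<cdot> y \<oplus> x \<oplus> x \<cdot> y)"
proof
  assume "least_dl_congruence add mul (Lbullet mul)"
  then show "\<forall>x y. x = x \<cdot> y \<oplus> x \<oplus> x \<cdot> y"
    unfolding least_dl_congruence_def using absorption_if_dl_congruence_Lbullet by blast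
next
  assume "\<forall>x y. x = x \<cdot> y \<oplus> x \<oplus> x \<cdot> y"
  then interpret absorptive_idempotent_semiring add mul
    by unfold_locales blast
  show "least_dl_congruence add mul (Lbullet mul)" by (rule least_dl_congruence_Lbullet)
qed

lemma left_normal_absorption_iff_absorption:
  "(\<forall>x y z. x \<cdot> y \<cdot> z = x \<cdot> z \<cdot> y) \<and> (\<forall>x y. x = x \<cdot> y \<cdot> x \<oplus> x \<oplus> x \<cdot> y \<cdot> x)
    \<longleftrightarrow> (\<forall>x y. x = x \<cdot> y \<oplus> x \<oplus> x \<cdot> y)"
proof
  assume "(\<forall>x y z. x \<cdot> y \<cdot> z = x \<cdot> z \<cdot> y) \<and> (\<forall>x y. x = x \<cdot> y \<cdot> x \<oplus> x \<oplus> x \<cdot> y \<cdot> x)"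
  moreover from this have "x \<cdot> y \<cdot> x = x \<cdot> y" for x y by (metis mul_idem)
  ultimately show "\<forall>x y. x = x \<cdot> y \<oplus> x \<oplus> x \<cdot> y" by metis
next
  assume "\<forall>x y. x = x \<cdot> y \<oplus> x \<oplus> x \<cdot> y"
  then interpret absorptive_idempotent_semiring add mul
    by unfold_locales blast
  show "(\<forall>x y z. x \<cdot> y \<cdot> z = x \<cdot> z \<cdot> y) \<and> (\<forall>x y. x = x \<cdot> y \<cdot> x \<oplus> x \<oplus> x \<cdot> y \<cdot> x)"
    using mul_left_normal mul_left_regular absorption by simp
qed

lemma right_absorption_iff_absorption:
  "(\<forall>x y z. x \<cdot> z = x \<cdot> z \<cdot> y \<oplus> x \<cdot> z \<oplus> x \<cdot> z \<cdot> y) \<longleftrightarrow> (\<forall>x y. x = x \<cdot> y \<oplus> x \<oplus> x \<cdot> y)"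
  by (metis mul_idem)

lemma left_normal_band_if_left_normal:
  assumes "\<forall>x y z. x \<cdot> y \<cdot> z = x \<cdot> z \<cdot> y"
  shows "left_normal_band mul"
  unfolding left_normal_band_def using assms mul_assoc mul_idem by blast

end

theorem theorem4p8:
  fixes add :: "'a \<Rightarrow> 'a \<Rightarrow> 'a" and mul :: "'a \<Rightarrow> 'a \<Rightarrow> 'a"
  assumes "idem_semiring add mul"
  defines "C1 \<equiv> (\<forall>x y z. mul (mul x y) z = mul (mul x z) y) \<and>
                 (\<forall>x y. x = add (add (mul (mul x y) x) x) (mul (mul x y) x))"
      and "C2 \<equiv> (\<forall>x y z. mul x z = add (add (mul (mul x z) y) (mul x z)) (mul (mul x z) y))"
      and "C3 \<equiv> least_dl_congruence add mul (Lbullet mul)"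
      and "C3' \<equiv> (\<forall>x y. x = add (add (mul x y) x) (mul x y))"
  shows "(C1 \<longleftrightarrow> C2) \<and> (C2 \<longleftrightarrow> C3) \<and> (C3 \<longleftrightarrow> C3') \<and> (C1 \<longrightarrow> left_normal_band mul)"
proof -
  interpret idempotent_semiring add mul
    using assms(1) by (simp add: idem_semiring_iff_idempotent_semiring)
  have "C1 \<longleftrightarrow> C3'" unfolding C1_def C3'_def by (rule left_normal_absorption_iff_absorption)
  moreover have "C2 \<longleftrightarrow> C3'" unfolding C2_def C3'_def by (rule right_absorption_iff_absorption)
  moreover have "C3 \<longleftrightarrow> C3'" unfolding C3_def C3'_def by (rule least_dl_congruence_Lbullet_iff_absorption)
  moreover have "C1 \<longrightarrow> left_normal_band mul"
    unfolding C1_def using left_normal_band_if_left_normal by blast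
  ultimately show ?thesis by blast
qed

end
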